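(* Suppose $\lambda_1=0$ and $\beta$ satisfies condition $(E)$. Let $\varphi$ be an entire function such that the composition operator $C_\varphi f=f\circ\varphi$ maps $\mathcal{H}(E,\beta)$ into itself and is bounded. Then exactly one of the following holds: (i) $\varphi$ is constant; or (ii) $\varphi(z)=z+b$ for some $b\in\mathbb{C}$ with $\operatorname{Re}(b)\ge0$.
   Context: Fix a sequence $\Lambda=(\lambda_n)_{n\ge1}$ of real numbers with $0\le\lambda_1<\lambda_2<\cdots$ and $\lambda_n\to+\infty$, such that $\limsup_{n\to\infty}\frac{\log n}{\lambda_n}<+\infty$. For a sequence $\beta=(\beta_n)$ of positive reals, condition $(E)$ is: $\liminf_{n\to\infty}\frac{\log\beta_n}{\lambda_n}=+\infty$. Under $(E)$, $\mathcal{H}(E,\beta)$ denotes the Hilbert space of entire functions $f(z)=\sum_{n=1}^\infty a_ne^{-\lambda_nz}$ ($a_n\in\mathbb{C}$; the representation is unique) with norm $\|f\|=\big(\sum_{n=1}^\infty|a_n|^2\beta_n^2\big)^{1/2}<\infty$. When $\lambda_1=0$ this space contains the constant functions. *)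

theory Defs
  imports "HOL-Analysis.Analysis"
begin

text \<open>Sequences are indexed from 0: lam 0 plays the role of lambda_1, etc.\<close>

definition frequency_seq :: "(nat \<Rightarrow> real) \<Rightarrow> bool" where
  "frequency_seq lam \<longleftrightarrow> lam 0 \<ge> 0 \<and> strict_mono lam \<and> filterlim lam at_top sequentially
     \<and> Limsup sequentially (\<lambda>n. ereal (ln (real (Suc n)) / lam n)) < \<infinity>"

definition condition_E :: "(nat \<Rightarrow> real) \<Rightarrow> (nat \<Rightarrow> real) \<Rightarrow> bool" where
  "condition_E lam beta \<longleftrightarrow> (\<forall>n. beta n > 0)
     \<and> Liminf sequentially (\<lambda>n. ereal (ln (beta n) / lam n)) = \<infinity>"

definition dirichlet_rep :: "(nat \<Rightarrow> real) \<Rightarrow> (nat \<Rightarrow> complex) \<Rightarrow> (complex \<Rightarrow> complex) \<Rightarrow> bool" where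
  "dirichlet_rep lam a f \<longleftrightarrow> (\<forall>z. (\<lambda>n. a n * exp (- complex_of_real (lam n) * z)) sums f z)"

definition HE_coeffs :: "(nat \<Rightarrow> real) \<Rightarrow> (nat \<Rightarrow> real) \<Rightarrow> (complex \<Rightarrow> complex) \<Rightarrow> (nat \<Rightarrow> complex) \<Rightarrow> bool" where
  "HE_coeffs lam beta f a \<longleftrightarrow> summable (\<lambda>n. (cmod (a n))\<^sup>2 * (beta n)\<^sup>2) \<and> dirichlet_rep lam a f"

definition in_HE :: "(nat \<Rightarrow> real) \<Rightarrow> (nat \<Rightarrow> real) \<Rightarrow> (complex \<Rightarrow> complex) \<Rightarrow> bool" where
  "in_HE lam beta f \<longleftrightarrow> (\<exists>a. HE_coeffs lam beta f a)"

text \<open>Norm in H(E,beta) (the representation is unique, so SOME picks the coefficients).\<close>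
definition HE_norm :: "(nat \<Rightarrow> real) \<Rightarrow> (nat \<Rightarrow> real) \<Rightarrow> (complex \<Rightarrow> complex) \<Rightarrow> real" where
  "HE_norm lam beta f = sqrt (\<Sum>n. (cmod ((SOME a. HE_coeffs lam beta f a) n))\<^sup>2 * (beta n)\<^sup>2)"

definition bounded_composition :: "(nat \<Rightarrow> real) \<Rightarrow> (nat \<Rightarrow> real) \<Rightarrow> (complex \<Rightarrow> complex) \<Rightarrow> bool" where
  "bounded_composition lam beta \<phi> \<longleftrightarrow>
     (\<forall>f. in_HE lam beta f \<longrightarrow> in_HE lam beta (f \<circ> \<phi>)) \<and>
     (\<exists>C. \<forall>f. in_HE lam beta f \<longrightarrow> HE_norm lam beta (f \<circ> \<phi>) \<le> C * HE_norm lam beta f)"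

end

theory Submission
  imports Defs "HOL-Complex_Analysis.Complex_Analysis" "HOL-Real_Asymp.Real_Asymp"
begin

text \<open>
  Let \<open>K(x) = \<Sum>n. exp (-2 \<lambda>\<^sub>n x) / \<beta>\<^sub>n\<^sup>2\<close>, finite by condition (E). For every \<open>\<zeta>\<close>,
  \<open>K(Re \<zeta>)\<close> is both the squared norm of the reproducing kernel \<open>k\<^sub>\<zeta>\<close> and its value at \<open>\<zeta>\<close>.
  Applying a bounded \<open>C\<^sub>\<phi>\<close> to the kernel at \<open>\<phi>(w)\<close> and evaluating at \<open>w\<close> gives
  \<open>K(Re \<phi>(w)) \<le> C K(Re w)\<close>. Since \<open>K\<close> decreases, tends to \<open>\<infinity>\<close> at \<open>-\<infinity>\<close>, and
  \<open>K(x - \<delta>) / K(x) \<rightarrow> \<infinity>\<close> there, this forces \<open>Re \<phi>(w) \<ge> Re w - \<delta>\<close> far to the left and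
  \<open>Re \<phi>\<close> bounded below on right half planes; so \<open>Re \<phi>(w) \<ge> -|w| - M\<close>, and by
  Borel--Carath\'eodory and Liouville \<open>\<phi>(z) = b + \<alpha> z\<close>. The same lower bounds make \<open>\<alpha>\<close> real
  with \<open>0 \<le> \<alpha> \<le> 1\<close>, and \<open>Re b \<ge> 0\<close> when \<open>\<alpha> = 1\<close>. Finally \<open>0 < \<alpha> < 1\<close> is impossible:
  \<open>exp (-\<lambda>\<^sub>2 z) \<circ> \<phi>\<close> would be a nonzero multiple of \<open>exp (-\<alpha> \<lambda>\<^sub>2 z)\<close>, whose frequency
  lies strictly between \<open>\<lambda>\<^sub>1 = 0\<close> and \<open>\<lambda>\<^sub>2\<close>, and so it has no expansion over \<open>\<Lambda>\<close>.
\<close>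

section \<open>Dirichlet series on the positive real axis\<close>

lemma nonpos_if_le_exp_decay:
  fixes a :: real
  assumes "g1 > 0" "g2 > 0"
    and "\<And>x. x \<ge> 0 \<Longrightarrow> a \<le> B1 * exp (- g1 * x) + B2 * exp (- g2 * x)"
  shows "a \<le> 0"
proof (rule tendsto_lowerbound)
  show "((\<lambda>x. B1 * exp (- g1 * x) + B2 * exp (- g2 * x)) \<longlongrightarrow> 0) at_top"
    using assms(1,2) by (intro tendsto_add_zero) real_asymp+
  show "\<forall>\<^sub>F x in at_top. a \<le> B1 * exp (- g1 * x) + B2 * exp (- g2 * x)"
    using eventually_ge_at_top[of 0] by eventually_elim (rule assms(3))
qed simp

lemma dirichlet_sum_leading_term:
  fixes c :: "nat \<Rightarrow> complex"
  assumes mono: "strict_mono lam" and summable: "summable (\<lambda>m. cmod (c m))"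
    and lower_zero: "\<forall>m<n. c m = 0" and x: "x \<ge> 0"
    and sums: "(\<lambda>m. c m * of_real (exp (- lam m * x))) sums G"
  shows "cmod (G * of_real (exp (lam n * x)) - c n)
    \<le> exp (- (lam (Suc n) - lam n) * x) * (\<Sum>m. cmod (c m))"
proof -
  define f where "f m = (if m = n then 0 else c m * of_real (exp (- (lam m - lam n) * x)))" for m
  have "(\<lambda>m. c m * of_real (exp (- lam m * x)) * of_real (exp (lam n * x)))
      sums (G * of_real (exp (lam n * x)))"
    by (rule sums_mult2[OF sums])
  moreover have "c m * of_real (exp (- lam m * x)) * of_real (exp (lam n * x))
      = f m + (if m = n then c n else 0)" for m
    by (simp add: f_def mult.assoc flip: of_real_mult exp_add) (simp add: algebra_simps)
  ultimately have "(\<lambda>m. f m + (if m = n then c n else 0)) sums (G * of_real (exp (lam n * x)))"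
    by simp
  from sums_diff[OF this sums_single[of n "\<lambda>_. c n"]]
  have f_sums: "f sums (G * of_real (exp (lam n * x)) - c n)" by simp
  have f_le: "norm (f m) \<le> exp (- (lam (Suc n) - lam n) * x) * cmod (c m)" for m
  proof (cases "Suc n \<le> m")
    case True
    then have "lam (Suc n) \<le> lam m" using mono by (simp add: strict_mono_less_eq)
    then have "exp (- (lam m - lam n) * x) \<le> exp (- (lam (Suc n) - lam n) * x)"
      using x by (simp add: mult_right_mono)
    from mult_left_mono[OF this norm_ge_zero[of "c m"]] show ?thesis
      using True by (simp add: f_def norm_mult mult.commute)
  next
    case False
    then show ?thesis using lower_zero by (auto simp: f_def)
  qed
  have bound_summable: "summable (\<lambda>m. exp (- (lam (Suc n) - lam n) * x) * cmod (c m))"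
    by (rule summable_mult[OF summable])
  have norm_summable: "summable (\<lambda>m. norm (f m))"
    by (rule summable_comparison_test'[OF bound_summable]) (use f_le in simp)
  have "cmod (G * of_real (exp (lam n * x)) - c n) = norm (\<Sum>m. f m)"
    using f_sums by (simp add: sums_iff)
  also have "\<dots> \<le> (\<Sum>m. norm (f m))"
    by (rule summable_norm[OF norm_summable])
  also have "\<dots> \<le> (\<Sum>m. exp (- (lam (Suc n) - lam n) * x) * cmod (c m))"
    by (rule suminf_le[OF f_le norm_summable bound_summable])
  also have "\<dots> = exp (- (lam (Suc n) - lam n) * x) * (\<Sum>m. cmod (c m))"
    by (rule suminf_mult[OF summable])
  finally show ?thesis .
qed

lemma dirichlet_coeffs_eq_0:
  fixes c :: "nat \<Rightarrow> complex"
  assumes mono: "strict_mono lam" and summable: "summable (\<lambda>m. cmod (c m))"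
    and sums: "\<And>x. x \<ge> 0 \<Longrightarrow> (\<lambda>m. c m * of_real (exp (- lam m * x))) sums 0"
  shows "c n = 0"
proof (induction n rule: less_induct)
  case (less n)
  have gap: "lam (Suc n) - lam n > 0" using mono by (simp add: strict_mono_less)
  have "cmod (c n) \<le> 0"
  proof (rule nonpos_if_le_exp_decay[OF gap gap])
    show "cmod (c n)
        \<le> 0 * exp (- (lam (Suc n) - lam n) * x) + (\<Sum>m. cmod (c m)) * exp (- (lam (Suc n) - lam n) * x)"
      if "x \<ge> 0" for x
      using dirichlet_sum_leading_term[OF mono summable _ that sums[OF that], of n] less
      by (simp add: mult.commute)
  qed
  then show ?case by simp
qed

lemma dirichlet_sum_eq_exp_imp_zero:
  fixes c :: "nat \<Rightarrow> complex"
  assumes mono: "strict_mono lam" and summable: "summable (\<lambda>m. cmod (c m))"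
    and \<mu>: "lam 0 < \<mu>" "\<mu> < lam 1"
    and sums: "\<And>x. x \<ge> 0 \<Longrightarrow>
      (\<lambda>m. c m * of_real (exp (- lam m * x))) sums (d * of_real (exp (- \<mu> * x)))"
  shows "d = 0"
proof -
  define S where "S = (\<Sum>m. cmod (c m))"
  have lead: "cmod (d * of_real (exp (- (\<mu> - lam 0) * x)) - c 0)
      \<le> S * exp (- (lam 1 - lam 0) * x)" if "x \<ge> 0" for x
  proof -
    have "exp (- \<mu> * x) * exp (lam 0 * x) = exp (- (\<mu> - lam 0) * x)"
      by (simp add: algebra_simps flip: exp_add)
    then have "d * of_real (exp (- \<mu> * x)) * of_real (exp (lam 0 * x))
        = d * of_real (exp (- (\<mu> - lam 0) * x))"
      by (metis mult.assoc of_real_mult)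
    with dirichlet_sum_leading_term[OF mono summable _ that sums[OF that], of 0] show ?thesis
      by (simp only: S_def mult.commute) simp
  qed
  have "cmod (c 0) \<le> 0"
  proof (rule nonpos_if_le_exp_decay)
    show "\<mu> - lam 0 > 0" "lam 1 - lam 0 > 0" using \<mu> by simp_all
    show "cmod (c 0) \<le> cmod d * exp (- (\<mu> - lam 0) * x) + S * exp (- (lam 1 - lam 0) * x)"
      if "x \<ge> 0" for x
      using lead[OF that] norm_triangle_ineq3[of "d * of_real (exp (- (\<mu> - lam 0) * x))" "c 0"]
      by (simp add: norm_mult norm_minus_commute)
  qed
  then have c0: "c 0 = 0" by simp
  have gap: "lam 1 - \<mu> > 0" using \<mu> by simp
  have "cmod d \<le> 0"
  proof (rule nonpos_if_le_exp_decay[OF gap gap])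
    show "cmod d \<le> 0 * exp (- (lam 1 - \<mu>) * x) + S * exp (- (lam 1 - \<mu>) * x)" if "x \<ge> 0" for x
    proof -
      have "cmod d * exp (- (\<mu> - lam 0) * x) \<le> S * exp (- (lam 1 - lam 0) * x)"
        using lead[OF that] c0 by (simp add: norm_mult)
      then have "cmod d * exp (- (\<mu> - lam 0) * x) * exp ((\<mu> - lam 0) * x)
          \<le> S * exp (- (lam 1 - lam 0) * x) * exp ((\<mu> - lam 0) * x)"
        by (rule mult_right_mono) simp
      then show ?thesis
        by (simp add: mult.assoc algebra_simps flip: exp_add)
    qed
  qed
  then show ?thesis by simp
qed

section \<open>A Borel--Carath\'eodory estimate\<close>

lemma cmod_diff_less_cmod_add_cnj:
  fixes p q :: complex
  assumes "Re p > 0" and "Re q > 0"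
  shows "cmod (p - q) < cmod (p + cnj q)"
proof (rule power2_less_imp_less)
  have "(Re p - Re q)\<^sup>2 < (Re p + Re q)\<^sup>2"
    using assms by (simp add: power2_eq_square algebra_simps)
  then show "(cmod (p - q))\<^sup>2 < (cmod (p + cnj q))\<^sup>2"
    by (simp add: cmod_power2)
qed simp

text \<open>The Cayley transform of \<open>h\<close> maps the disc into itself and fixes \<open>0\<close>; apply the Schwarz lemma.\<close>

lemma holomorphic_Re_pos_diff_le:
  assumes hol: "h holomorphic_on ball 0 1" and pos: "\<And>v. cmod v < 1 \<Longrightarrow> Re (h v) > 0"
    and u: "cmod u \<le> 1/2"
  shows "cmod (h u - h 0) \<le> 2 * Re (h 0)"
proof -
  have denom_nz: "h v + cnj (h 0) \<noteq> 0" if "cmod v < 1" for v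
  proof -
    have "Re (h v + cnj (h 0)) > 0" using pos[OF that] pos[of 0] by simp
    then show ?thesis by (metis less_irrefl zero_complex.sel(1))
  qed
  define F where "F v = (h v - h 0) / (h v + cnj (h 0))" for v
  have "F holomorphic_on ball 0 1"
    unfolding F_def using denom_nz by (intro holomorphic_intros hol) auto
  moreover have "cmod (F v) < 1" if "cmod v < 1" for v
    using cmod_diff_less_cmod_add_cnj[of "h v" "h 0"] pos[OF that] pos[of 0] denom_nz[OF that]
    by (simp add: F_def norm_divide divide_less_eq)
  ultimately have "cmod (F u) \<le> 1/2"
    using Schwarz_Lemma(1)[of F u] u by (simp add: F_def)
  then have "cmod (h u - h 0) \<le> 1/2 * cmod (h u + cnj (h 0))"
    using denom_nz[of u] u by (simp add: F_def norm_divide divide_le_eq)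
  also have "\<dots> \<le> 1/2 * (cmod (h u - h 0) + cmod (h 0 + cnj (h 0)))"
    using norm_triangle_ineq[of "h u - h 0" "h 0 + cnj (h 0)"] by simp
  finally have "cmod (h u - h 0) \<le> cmod (h 0 + cnj (h 0))" by simp
  also have "h 0 + cnj (h 0) = of_real (2 * Re (h 0))" by (simp add: complex_eq_iff)
  finally show ?thesis using pos[of 0] by simp
qed

lemma entire_diff_bound_of_Re_lower_bound:
  fixes \<phi> :: "complex \<Rightarrow> complex"
  assumes hol: "\<phi> holomorphic_on UNIV" and lower: "\<And>w. - cmod w - M \<le> Re (\<phi> w)"
  shows "cmod (\<phi> w - \<phi> 0) \<le> 2 * (Re (\<phi> 0) + 2 * cmod w + \<bar>M\<bar> + 1)"
proof (cases "w = 0")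
  case True
  then show ?thesis using lower[of 0] by simp
next
  case False
  define R where "R = 2 * cmod w"
  define h where "h u = \<phi> (of_real R * u) + of_real (R + \<bar>M\<bar> + 1)" for u
  have "h holomorphic_on ball 0 1"
    unfolding h_def
    by (intro holomorphic_intros holomorphic_on_compose_gen[OF _ hol, unfolded o_def]) auto
  moreover have "Re (h u) > 0" if "cmod u < 1" for u
  proof -
    have "cmod (of_real R * u) \<le> R" using that by (simp add: R_def norm_mult mult_left_le)
    then show ?thesis using lower[of "of_real R * u"] by (simp add: h_def)
  qed
  moreover have "cmod (w / of_real R) \<le> 1/2"
    using False by (simp add: R_def norm_divide)
  ultimately have "cmod (h (w / of_real R) - h 0) \<le> 2 * Re (h 0)"
    by (rule holomorphic_Re_pos_diff_le)
  then show ?thesis using False by (simp add: h_def R_def)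
qed

lemma entire_affine_of_Re_lower_bound:
  fixes \<phi> :: "complex \<Rightarrow> complex"
  assumes hol: "\<phi> holomorphic_on UNIV" and lower: "\<And>w. - cmod w - M \<le> Re (\<phi> w)"
  shows "\<phi> z = \<phi> 0 + deriv \<phi> 0 * z"
proof -
  define D where "D = cmod (\<phi> 0) + 2 * \<bar>Re (\<phi> 0)\<bar> + 2 * \<bar>M\<bar> + 2"
  have "cmod (\<phi> w) \<le> (4 + D) * cmod w ^ 1" if "1 \<le> cmod w" for w
  proof -
    have "cmod (\<phi> w) \<le> cmod (\<phi> 0) + cmod (\<phi> w - \<phi> 0)"
      using norm_triangle_ineq[of "\<phi> 0" "\<phi> w - \<phi> 0"] by simp
    also have "\<dots> \<le> 4 * cmod w + D"
      using entire_diff_bound_of_Re_lower_bound[OF hol lower, of w] by (simp add: D_def)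
    also have "\<dots> \<le> (4 + D) * cmod w"
      using that mult_left_mono[OF that, of D] by (simp add: D_def algebra_simps)
    finally show ?thesis by simp
  qed
  from Liouville_polynomial[OF hol this, where \<xi> = z] show ?thesis by simp
qed

section \<open>The space \<open>\<H>(E,\<beta>)\<close> and its reproducing kernels\<close>

lemma dirichlet_rep_of_real:
  assumes "dirichlet_rep lam a f"
  shows "(\<lambda>n. a n * of_real (exp (- lam n * x))) sums f (of_real x)"
  using assms[unfolded dirichlet_rep_def, rule_format, of "of_real x"] by (simp flip: exp_of_real)

lemma exp_two_mult_ln: "y > 0 \<Longrightarrow> exp (2 * ln y) = (y::real)\<^sup>2"
  using exp_of_nat_mult[of 2 "ln y"] by simp

lemma mult_le_weighted_sq_sum:
  fixes a b t :: real
  assumes "t > 0"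
  shows "a * b \<le> (t * a\<^sup>2 + b\<^sup>2 / t) / 2"
proof -
  have "0 \<le> (t * a - b)\<^sup>2 / t" using assms by simp
  also have "\<dots> = t * a\<^sup>2 + b\<^sup>2 / t - 2 * (a * b)"
    using assms by (simp add: power2_eq_square field_simps)
  finally show ?thesis by simp
qed

locale dirichlet_HE =
  fixes lam beta :: "nat \<Rightarrow> real"
  assumes frequency_seq: "frequency_seq lam" and condition_E: "condition_E lam beta"
begin

lemma strict_mono_lam: "strict_mono lam"
  using frequency_seq by (simp add: frequency_seq_def)

lemma lam_nonneg: "lam n \<ge> 0"
  using frequency_seq strict_mono_less_eq[OF strict_mono_lam, of 0 n]
  by (simp add: frequency_seq_def)

lemma lam_pos: "n > 0 \<Longrightarrow> lam n > 0"
  using lam_nonneg[of 0] strict_mono_less[OF strict_mono_lam, of 0 n] by simp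

lemma lam_at_top: "filterlim lam at_top sequentially"
  using frequency_seq by (simp add: frequency_seq_def)

lemma beta_pos: "beta n > 0"
  using condition_E by (simp add: condition_E_def)

definition kernel_norm_sq :: "real \<Rightarrow> real" where
  "kernel_norm_sq x = (\<Sum>n. exp (-2 * lam n * x) / (beta n)\<^sup>2)"

text \<open>
  Both growth hypotheses enter here: eventually \<open>ln (n + 1) < k \<lambda>\<^sub>n\<close> and
  \<open>ln \<beta>\<^sub>n > (|x| + k + 1) \<lambda>\<^sub>n\<close>, which bound the \<open>n\<close>-th term by \<open>1 / (n + 1)\<^sup>2\<close>.
\<close>

lemma summable_kernel_terms: "summable (\<lambda>n. exp (-2 * lam n * x) / (beta n)\<^sup>2)"
proof (rule summable_comparison_test_ev)
  obtain k :: nat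
    where "Limsup sequentially (\<lambda>n. ereal (ln (real (Suc n)) / lam n)) < ereal (real k)"
    using frequency_seq less_PInf_Ex_of_nat by (auto simp: frequency_seq_def)
  then have "\<forall>\<^sub>F n in sequentially. ereal (ln (real (Suc n)) / lam n) < ereal k"
    by (rule Limsup_lessD)
  then have log_small: "\<forall>\<^sub>F n in sequentially. ln (real (Suc n)) / lam n < k"
    by simp
  have "Liminf sequentially (\<lambda>n. ereal (ln (beta n) / lam n)) = \<infinity>"
    using condition_E by (simp add: condition_E_def)
  then have "\<forall>\<^sub>F n in sequentially. ereal (\<bar>x\<bar> + k + 1) < ereal (ln (beta n) / lam n)"
    by (intro less_LiminfD) simp
  then have beta_big: "\<forall>\<^sub>F n in sequentially. \<bar>x\<bar> + k + 1 < ln (beta n) / lam n"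
    by simp
  have lam_pos_ev: "\<forall>\<^sub>F n in sequentially. lam n > 0"
    using eventually_gt_at_top[of 0] by eventually_elim (rule lam_pos)
  show "\<forall>\<^sub>F n in sequentially.
      norm (exp (-2 * lam n * x) / (beta n)\<^sup>2) \<le> inverse (real (Suc n) ^ 2)"
    using log_small beta_big lam_pos_ev
  proof eventually_elim
    case (elim n)
    have "- (lam n * \<bar>x\<bar>) \<le> lam n * x"
      using mult_left_mono[of "- \<bar>x\<bar>" x "lam n"] elim(3) by simp
    with elim have "ln (real (Suc n)) \<le> lam n * x + ln (beta n)"
      by (simp add: field_simps)
    have "exp (-2 * lam n * x) / (beta n)\<^sup>2 = exp (-2 * (lam n * x + ln (beta n)))"
      by (subst exp_two_mult_ln[OF beta_pos, symmetric])
        (simp add: algebra_simps flip: exp_diff)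
    also have "\<dots> \<le> exp (-2 * ln (real (Suc n)))"
      using \<open>ln (real (Suc n)) \<le> lam n * x + ln (beta n)\<close> by simp
    also have "\<dots> = inverse (real (Suc n) ^ 2)"
      using exp_two_mult_ln[of "real (Suc n)"] by (simp add: exp_minus del: of_nat_Suc)
    finally show ?case by simp
  qed
  show "summable (\<lambda>n. inverse (real (Suc n) ^ 2))"
    using inverse_power_summable[of 2, where 'a=real]
      summable_Suc_iff[of "\<lambda>n. inverse (real n ^ 2)"]
    by simp
qed

lemma dirichlet_term_le:
  assumes "t > 0"
  shows "cmod (a n) * exp (- lam n * x)
    \<le> (t * ((cmod (a n))\<^sup>2 * (beta n)\<^sup>2) + exp (-2 * lam n * x) / (beta n)\<^sup>2 / t) / 2"
proof -
  have "cmod (a n) * exp (- lam n * x) = (cmod (a n) * beta n) * (exp (- lam n * x) / beta n)"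
    using beta_pos[of n] by simp
  also have "\<dots> \<le> (t * (cmod (a n) * beta n)\<^sup>2 + (exp (- lam n * x) / beta n)\<^sup>2 / t) / 2"
    by (rule mult_le_weighted_sq_sum[OF assms])
  also have "\<dots> = (t * ((cmod (a n))\<^sup>2 * (beta n)\<^sup>2) + exp (-2 * lam n * x) / (beta n)\<^sup>2 / t) / 2"
    by (simp add: power_mult_distrib power_divide flip: exp_of_nat_mult)
  finally show ?thesis .
qed

lemma summable_dirichlet_terms:
  assumes "summable (\<lambda>n. (cmod (a n))\<^sup>2 * (beta n)\<^sup>2)"
  shows "summable (\<lambda>n. cmod (a n) * exp (- lam n * x))"
proof (rule summable_comparison_test')
  show "summable
      (\<lambda>n. (1 * ((cmod (a n))\<^sup>2 * (beta n)\<^sup>2) + exp (-2 * lam n * x) / (beta n)\<^sup>2 / 1) / 2)"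
    using assms summable_kernel_terms by (intro summable_divide summable_add) auto
  show "norm (cmod (a n) * exp (- lam n * x))
      \<le> (1 * ((cmod (a n))\<^sup>2 * (beta n)\<^sup>2) + exp (-2 * lam n * x) / (beta n)\<^sup>2 / 1) / 2" for n
    using dirichlet_term_le[of 1 a n x] by simp
qed

lemma summable_coeffs:
  assumes "summable (\<lambda>n. (cmod (a n))\<^sup>2 * (beta n)\<^sup>2)"
  shows "summable (\<lambda>n. cmod (a n))"
  using summable_dirichlet_terms[OF assms, of 0] by simp

text \<open>
  The point evaluation bound \<open>|f z| \<le> \<parallel>f\<parallel> \<parallel>k\<^sub>z\<parallel>\<close> in weighted AM--GM form: the free weight \<open>t\<close>
  replaces Cauchy--Schwarz.
\<close>

lemma norm_le_kernel_norm_sq: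
  assumes coeffs: "HE_coeffs lam beta f a" and "t > 0"
  shows "cmod (f z)
    \<le> (t * (\<Sum>n. (cmod (a n))\<^sup>2 * (beta n)\<^sup>2) + kernel_norm_sq (Re z) / t) / 2"
proof -
  have summable: "summable (\<lambda>n. (cmod (a n))\<^sup>2 * (beta n)\<^sup>2)"
    and sums: "(\<lambda>n. a n * exp (- of_real (lam n) * z)) sums f z"
    using coeffs by (auto simp: HE_coeffs_def dirichlet_rep_def)
  define u where "u n = norm (a n * exp (- of_real (lam n) * z))" for n
  have u_eq: "u n = cmod (a n) * exp (- lam n * Re z)" for n
    by (simp add: u_def norm_mult norm_exp_eq_Re)
  have u_summable: "summable u"
    unfolding u_eq by (rule summable_dirichlet_terms[OF summable])
  have bound_sums:
    "(\<lambda>n. (t * ((cmod (a n))\<^sup>2 * (beta n)\<^sup>2) + exp (-2 * lam n * Re z) / (beta n)\<^sup>2 / t) / 2)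
      sums ((t * (\<Sum>n. (cmod (a n))\<^sup>2 * (beta n)\<^sup>2) + kernel_norm_sq (Re z) / t) / 2)"
    unfolding kernel_norm_sq_def
    by (intro sums_divide sums_add sums_mult summable_sums summable summable_kernel_terms)
  have "suminf u \<le> (t * (\<Sum>n. (cmod (a n))\<^sup>2 * (beta n)\<^sup>2) + kernel_norm_sq (Re z) / t) / 2"
    using dirichlet_term_le[OF \<open>t > 0\<close>, of a _ "Re z"]
    by (intro sums_le[OF _ summable_sums[OF u_summable] bound_sums]) (simp only: u_eq)
  moreover have "cmod (f z) \<le> suminf u"
    unfolding u_def using summable_norm[OF u_summable[unfolded u_def]] sums by (simp add: sums_iff)
  ultimately show ?thesis by linarith
qed

lemma HE_coeffs_unique:
  assumes "HE_coeffs lam beta f a" and "HE_coeffs lam beta f b"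
  shows "a = b"
proof
  fix n
  have summable_ab: "summable (\<lambda>m. cmod (a m))" "summable (\<lambda>m. cmod (b m))"
    using assms summable_coeffs by (auto simp: HE_coeffs_def)
  have "summable (\<lambda>m. cmod (a m - b m))"
    by (rule summable_comparison_test'[OF summable_add[OF summable_ab]])
      (simp add: norm_triangle_ineq4)
  moreover have "(\<lambda>m. (a m - b m) * of_real (exp (- lam m * x))) sums 0" for x
  proof -
    have "(\<lambda>m. a m * of_real (exp (- lam m * x))) sums f (of_real x)"
      "(\<lambda>m. b m * of_real (exp (- lam m * x))) sums f (of_real x)"
      using assms dirichlet_rep_of_real unfolding HE_coeffs_def by blast+
    from sums_diff[OF this] show ?thesis by (simp add: left_diff_distrib)
  qed
  ultimately have "a n - b n = 0"
    by (rule dirichlet_coeffs_eq_0[OF strict_mono_lam])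
  then show "a n = b n" by simp
qed

lemma HE_norm_eq:
  assumes "HE_coeffs lam beta f a"
  shows "HE_norm lam beta f = sqrt (\<Sum>n. (cmod (a n))\<^sup>2 * (beta n)\<^sup>2)"
proof -
  have "HE_coeffs lam beta f (SOME a. HE_coeffs lam beta f a)"
    using someI[where P = "HE_coeffs lam beta f", OF assms] .
  then have "(SOME a. HE_coeffs lam beta f a) = a"
    using assms by (rule HE_coeffs_unique)
  then show ?thesis by (simp add: HE_norm_def)
qed

lemma kernel_norm_sq_ge_term: "exp (-2 * lam n * x) / (beta n)\<^sup>2 \<le> kernel_norm_sq x"
  unfolding kernel_norm_sq_def
  using sum_le_suminf[OF summable_kernel_terms, of "{n}"] by simp

lemma kernel_norm_sq_pos: "kernel_norm_sq x > 0"
  using kernel_norm_sq_ge_term[of 0 x] beta_pos[of 0]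
  by (meson divide_pos_pos exp_gt_zero zero_less_power less_le_trans)

lemma kernel_norm_sq_antimono:
  assumes "x \<le> y"
  shows "kernel_norm_sq y \<le> kernel_norm_sq x"
  unfolding kernel_norm_sq_def
proof (intro suminf_le summable_kernel_terms)
  show "exp (-2 * lam n * y) / (beta n)\<^sup>2 \<le> exp (-2 * lam n * x) / (beta n)\<^sup>2" for n
    using assms lam_nonneg[of n] by (intro divide_right_mono) (simp_all add: mult_left_mono)
qed

lemma kernel_norm_sq_at_bot: "filterlim kernel_norm_sq at_top at_bot"
  using always_eventually[OF allI[OF kernel_norm_sq_ge_term[of 1]]]
proof (rule filterlim_at_top_mono[rotated])
  show "filterlim (\<lambda>x. exp (-2 * lam 1 * x) / (beta 1)\<^sup>2) at_top at_bot"
    using lam_pos[of 1] beta_pos[of 1] by real_asymp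
qed

lemma kernel_norm_sq_head_le:
  "\<forall>\<^sub>F x in at_bot. 2 * (\<Sum>n<N. exp (-2 * lam n * x) / (beta n)\<^sup>2) \<le> kernel_norm_sq x"
proof -
  define t where "t x n = exp (-2 * lam n * x) / (beta n)\<^sup>2" for x n
  have "((\<lambda>x. t x n / t x N) \<longlongrightarrow> 0) at_bot" if "n < N" for n
  proof -
    define g where "g = lam N - lam n"
    have "g > 0" using that strict_mono_lam by (simp add: g_def strict_mono_less)
    then have "((\<lambda>x. (beta N)\<^sup>2 / (beta n)\<^sup>2 * exp (2 * g * x)) \<longlongrightarrow> 0) at_bot"
      by real_asymp
    moreover have "t x n / t x N = (beta N)\<^sup>2 / (beta n)\<^sup>2 * exp (2 * g * x)" for x
      by (simp add: t_def g_def exp_diff exp_minus field_simps)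
    ultimately show ?thesis by simp
  qed
  then have "((\<lambda>x. (\<Sum>n<N. t x n) / t x N) \<longlongrightarrow> 0) at_bot"
    unfolding sum_divide_distrib by (intro tendsto_null_sum) auto
  then have "\<forall>\<^sub>F x in at_bot. (\<Sum>n<N. t x n) / t x N < 1"
    by (rule order_tendstoD) simp
  then show ?thesis
  proof eventually_elim
    case (elim x)
    have "t x N > 0" using beta_pos[of N] by (simp add: t_def)
    with elim have "(\<Sum>n<N. t x n) \<le> t x N" by (simp add: divide_less_eq)
    moreover have "(\<Sum>n<N. t x n) + t x N \<le> kernel_norm_sq x"
      using sum_le_suminf[OF summable_kernel_terms, of "{..<Suc N}" x]
      by (simp add: t_def kernel_norm_sq_def)
    ultimately show ?case by (simp add: t_def)
  qed
qed

text \<open>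
  Discard the first \<open>N\<close> terms, at most half of \<open>K x\<close> far to the left, and use
  \<open>exp (2 \<lambda>\<^sub>n \<delta>) \<ge> 2 C\<close> for all later ones.
\<close>

lemma kernel_norm_sq_shift:
  assumes "\<delta> > 0"
  shows "\<forall>\<^sub>F x in at_bot. C * kernel_norm_sq x \<le> kernel_norm_sq (x - \<delta>)"
proof -
  define t where "t x n = exp (-2 * lam n * x) / (beta n)\<^sup>2" for x n
  define C' where "C' = max C 0"
  have "filterlim (\<lambda>n. exp (2 * \<delta> * lam n)) at_top sequentially"
    by (rule filterlim_compose[OF _ lam_at_top]) (use assms in real_asymp)
  then obtain N where N: "\<And>n. n \<ge> N \<Longrightarrow> 2 * C' \<le> exp (2 * \<delta> * lam n)"
    unfolding filterlim_at_top eventually_sequentially by blast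
  show ?thesis
    using kernel_norm_sq_head_le[of N]
  proof eventually_elim
    case (elim x)
    define H where "H = (\<Sum>n<N. t x n)"
    have "(\<lambda>n. 2 * C' * (t x n - (if n \<in> {..<N} then t x n else 0)))
        sums (2 * C' * (kernel_norm_sq x - H))"
      unfolding kernel_norm_sq_def H_def t_def
      by (intro sums_mult sums_diff summable_sums summable_kernel_terms sums_If_finite_set) simp
    moreover have "(\<lambda>n. t (x - \<delta>) n) sums kernel_norm_sq (x - \<delta>)"
      unfolding kernel_norm_sq_def t_def by (rule summable_sums[OF summable_kernel_terms])
    moreover have "2 * C' * (t x n - (if n \<in> {..<N} then t x n else 0)) \<le> t (x - \<delta>) n" for n
    proof (cases "n < N")
      case False
      have "t (x - \<delta>) n = exp (2 * \<delta> * lam n) * t x n"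
        by (simp add: t_def algebra_simps flip: exp_add)
      moreover have "t x n \<ge> 0" by (simp add: t_def)
      ultimately show ?thesis using N[of n] False by (simp add: mult_right_mono)
    qed (simp add: t_def)
    ultimately have "2 * C' * (kernel_norm_sq x - H) \<le> kernel_norm_sq (x - \<delta>)"
      by (rule sums_le[rotated])
    moreover have "C * kernel_norm_sq x \<le> C' * kernel_norm_sq x"
      using kernel_norm_sq_pos[of x] by (simp add: C'_def mult_right_mono)
    moreover have "0 \<le> C' * (kernel_norm_sq x - 2 * H)"
      using elim by (simp add: C'_def H_def t_def)
    ultimately show ?case by (simp add: algebra_simps)
  qed
qed

definition kernel_coeffs :: "complex \<Rightarrow> nat \<Rightarrow> complex" where
  "kernel_coeffs \<zeta> n = exp (- of_real (lam n) * cnj \<zeta>) / of_real ((beta n)\<^sup>2)"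

definition reproducing_kernel :: "complex \<Rightarrow> complex \<Rightarrow> complex" where
  "reproducing_kernel \<zeta> z = (\<Sum>n. kernel_coeffs \<zeta> n * exp (- of_real (lam n) * z))"

lemma kernel_coeffs_weighted_sq:
  "(cmod (kernel_coeffs \<zeta> n))\<^sup>2 * (beta n)\<^sup>2 = exp (-2 * lam n * Re \<zeta>) / (beta n)\<^sup>2"
  using beta_pos[of n]
  by (simp add: kernel_coeffs_def norm_divide norm_power norm_exp_eq_Re power_divide field_simps
      flip: exp_of_nat_mult)

lemma HE_coeffs_reproducing_kernel: "HE_coeffs lam beta (reproducing_kernel \<zeta>) (kernel_coeffs \<zeta>)"
proof -
  have summable: "summable (\<lambda>n. (cmod (kernel_coeffs \<zeta> n))\<^sup>2 * (beta n)\<^sup>2)"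
    unfolding kernel_coeffs_weighted_sq by (rule summable_kernel_terms)
  have "summable (\<lambda>n. norm (kernel_coeffs \<zeta> n * exp (- of_real (lam n) * z)))" for z
    using summable_dirichlet_terms[OF summable, of "Re z"] by (simp add: norm_mult norm_exp_eq_Re)
  then show ?thesis
    using summable
    by (auto simp: HE_coeffs_def dirichlet_rep_def reproducing_kernel_def
        intro: summable_sums summable_norm_cancel)
qed

lemma in_HE_reproducing_kernel: "in_HE lam beta (reproducing_kernel \<zeta>)"
  using HE_coeffs_reproducing_kernel by (auto simp: in_HE_def)

lemma HE_norm_reproducing_kernel:
  "HE_norm lam beta (reproducing_kernel \<zeta>) = sqrt (kernel_norm_sq (Re \<zeta>))"
  by (simp add: HE_norm_eq[OF HE_coeffs_reproducing_kernel] kernel_coeffs_weighted_sq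
      kernel_norm_sq_def)

lemma reproducing_kernel_diag: "reproducing_kernel \<zeta> \<zeta> = of_real (kernel_norm_sq (Re \<zeta>))"
proof -
  have exponent: "- of_real (lam n) * cnj \<zeta> + - of_real (lam n) * \<zeta> = of_real (-2 * lam n * Re \<zeta>)"
    for n by (simp add: complex_eq_iff)
  have "kernel_coeffs \<zeta> n * exp (- of_real (lam n) * \<zeta>)
      = of_real (exp (-2 * lam n * Re \<zeta>) / (beta n)\<^sup>2)" for n
    unfolding kernel_coeffs_def
    by (simp only: times_divide_eq_left exp_add[symmetric] exponent exp_of_real of_real_divide)
  then show ?thesis
    using sums_of_real[where 'a = complex, OF summable_sums[OF summable_kernel_terms, of "Re \<zeta>"]]
    unfolding reproducing_kernel_def kernel_norm_sq_def by (simp add: sums_iff)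
qed

lemma in_HE_exp_frequency: "in_HE lam beta (\<lambda>z. exp (- of_real (lam k) * z))"
proof -
  define a where "a n = (if n = k then 1 else 0 :: complex)" for n
  have "HE_coeffs lam beta (\<lambda>z. exp (- of_real (lam k) * z)) a"
    unfolding HE_coeffs_def dirichlet_rep_def
  proof (intro conjI allI)
    have "(\<lambda>n. (cmod (a n))\<^sup>2 * (beta n)\<^sup>2) = (\<lambda>n. if n = k then (beta k)\<^sup>2 else 0)"
      by (auto simp: a_def)
    then show "summable (\<lambda>n. (cmod (a n))\<^sup>2 * (beta n)\<^sup>2)" by simp
    fix z
    have "(\<lambda>n. a n * exp (- of_real (lam n) * z))
        = (\<lambda>n. if n = k then exp (- of_real (lam k) * z) else 0)"
      by (auto simp: a_def)
    then show "(\<lambda>n. a n * exp (- of_real (lam n) * z)) sums exp (- of_real (lam k) * z)"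
      using sums_single[of k "\<lambda>_. exp (- of_real (lam k) * z)"] by simp
  qed
  then show ?thesis by (auto simp: in_HE_def)
qed

lemma not_in_HE_exp:
  assumes "lam 0 < \<mu>" "\<mu> < lam 1" and "d \<noteq> 0"
  shows "\<not> in_HE lam beta (\<lambda>z. d * exp (- of_real \<mu> * z))"
proof
  assume "in_HE lam beta (\<lambda>z. d * exp (- of_real \<mu> * z))"
  then obtain c where c: "HE_coeffs lam beta (\<lambda>z. d * exp (- of_real \<mu> * z)) c"
    by (auto simp: in_HE_def)
  have "(\<lambda>m. c m * of_real (exp (- lam m * x))) sums (d * of_real (exp (- \<mu> * x)))" for x
    using dirichlet_rep_of_real[of lam c "\<lambda>z. d * exp (- of_real \<mu> * z)" x] c
    by (simp add: HE_coeffs_def flip: exp_of_real)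
  moreover have "summable (\<lambda>m. cmod (c m))"
    using c summable_coeffs by (simp add: HE_coeffs_def)
  ultimately have "d = 0"
    using dirichlet_sum_eq_exp_imp_zero[OF strict_mono_lam _ assms(1,2)] by blast
  with \<open>d \<noteq> 0\<close> show False ..
qed

section \<open>Bounded composition operators\<close>

lemma affine_Re_bounded_below_on_right_half_plane:
  assumes "\<And>w. Re w \<ge> 0 \<Longrightarrow> m \<le> Re (b + \<alpha> * w)"
  shows "Im \<alpha> = 0" and "Re \<alpha> \<ge> 0"
proof -
  show "Im \<alpha> = 0"
  proof (rule ccontr)
    assume "Im \<alpha> \<noteq> 0"
    then have "Re (b + \<alpha> * (\<i> * of_real ((Re b - m + 1) / Im \<alpha>))) = m - 1"
      by simp
    then show False using assms[of "\<i> * of_real ((Re b - m + 1) / Im \<alpha>)"] by simp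
  qed
  show "Re \<alpha> \<ge> 0"
  proof (rule ccontr)
    assume "\<not> Re \<alpha> \<ge> 0"
    then have "Re (b + \<alpha> * of_real ((\<bar>Re b\<bar> + \<bar>m\<bar> + 1) / - Re \<alpha>))
        = Re b - (\<bar>Re b\<bar> + \<bar>m\<bar> + 1)"
      by simp
    moreover have "(\<bar>Re b\<bar> + \<bar>m\<bar> + 1) / - Re \<alpha> \<ge> 0"
      using \<open>\<not> Re \<alpha> \<ge> 0\<close> by (simp add: divide_nonneg_neg)
    ultimately show False
      using assms[of "of_real ((\<bar>Re b\<bar> + \<bar>m\<bar> + 1) / - Re \<alpha>)"] by simp
  qed
qed

context
  fixes \<phi> :: "complex \<Rightarrow> complex"
  assumes bounded: "bounded_composition lam beta \<phi>"
begin

lemma in_HE_comp: "in_HE lam beta f \<Longrightarrow> in_HE lam beta (f \<circ> \<phi>)"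
  using bounded by (simp add: bounded_composition_def)

text \<open>Apply \<open>C\<^sub>\<phi>\<close> to the kernel at \<open>\<phi> w\<close> and evaluate the image at \<open>w\<close>.\<close>

lemma kernel_norm_sq_symbol_le:
  obtains C where "C > 0" and "\<And>w. kernel_norm_sq (Re (\<phi> w)) \<le> C * kernel_norm_sq (Re w)"
proof -
  obtain C0
    where C0: "\<And>f. in_HE lam beta f \<Longrightarrow> HE_norm lam beta (f \<circ> \<phi>) \<le> C0 * HE_norm lam beta f"
    using bounded by (auto simp: bounded_composition_def)
  define C where "C = (max C0 1)\<^sup>2"
  have "kernel_norm_sq (Re (\<phi> w)) \<le> C * kernel_norm_sq (Re w)" for w
  proof -
    define K where "K = kernel_norm_sq (Re (\<phi> w))"
    have K_pos: "K > 0" by (simp add: K_def kernel_norm_sq_pos)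
    obtain a where a: "HE_coeffs lam beta (reproducing_kernel (\<phi> w) \<circ> \<phi>) a"
      using in_HE_comp[OF in_HE_reproducing_kernel] by (auto simp: in_HE_def)
    define A where "A = (\<Sum>n. (cmod (a n))\<^sup>2 * (beta n)\<^sup>2)"
    have "sqrt A \<le> C0 * sqrt K"
      using C0[OF in_HE_reproducing_kernel, of "\<phi> w"]
      by (simp add: HE_norm_eq[OF a] HE_norm_reproducing_kernel A_def K_def)
    also have "\<dots> \<le> max C0 1 * sqrt K"
      using K_pos by (intro mult_right_mono) simp_all
    also have "\<dots> = sqrt (C * K)"
      by (simp add: C_def real_sqrt_mult)
    finally have "A / C \<le> K"
      by (simp add: C_def divide_le_eq mult.commute)
    moreover have "cmod ((reproducing_kernel (\<phi> w) \<circ> \<phi>) w) = K"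
      using K_pos by (simp add: reproducing_kernel_diag K_def)
    moreover have "cmod ((reproducing_kernel (\<phi> w) \<circ> \<phi>) w)
        \<le> (A / C + C * kernel_norm_sq (Re w)) / 2"
      using norm_le_kernel_norm_sq[OF a, of "1 / C" w] by (simp add: A_def C_def mult.commute)
    ultimately show ?thesis by (simp add: K_def)
  qed
  then show ?thesis using that[of C] by (simp add: C_def)
qed

lemma Re_symbol_ge_shift_left:
  assumes "\<delta> > 0"
  obtains T where "\<And>w. Re w \<le> T \<Longrightarrow> Re w - \<delta> \<le> Re (\<phi> w)"
proof -
  obtain C where "C > 0" and C: "\<And>w. kernel_norm_sq (Re (\<phi> w)) \<le> C * kernel_norm_sq (Re w)"
    using kernel_norm_sq_symbol_le by blast
  obtain T where T: "\<And>x. x \<le> T \<Longrightarrow> 2 * C * kernel_norm_sq x \<le> kernel_norm_sq (x - \<delta>)"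
    using kernel_norm_sq_shift[OF assms, of "2 * C"] by (auto simp: eventually_at_bot_linorder)
  have "Re w - \<delta> \<le> Re (\<phi> w)" if "Re w \<le> T" for w
  proof (rule ccontr)
    assume "\<not> Re w - \<delta> \<le> Re (\<phi> w)"
    then have "kernel_norm_sq (Re w - \<delta>) \<le> kernel_norm_sq (Re (\<phi> w))"
      by (intro kernel_norm_sq_antimono) simp
    moreover have "C * kernel_norm_sq (Re w) > 0"
      using \<open>C > 0\<close> kernel_norm_sq_pos by simp
    ultimately show False
      using T[OF that] C[of w] by linarith
  qed
  then show ?thesis by (rule that)
qed

lemma Re_symbol_bounded_below:
  obtains m where "\<And>w. T \<le> Re w \<Longrightarrow> m \<le> Re (\<phi> w)"
proof -
  obtain C where "C > 0" and C: "\<And>w. kernel_norm_sq (Re (\<phi> w)) \<le> C * kernel_norm_sq (Re w)"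
    using kernel_norm_sq_symbol_le by blast
  obtain m where m: "\<And>x. x \<le> m \<Longrightarrow> C * kernel_norm_sq T < kernel_norm_sq x"
    using kernel_norm_sq_at_bot[unfolded filterlim_at_top_dense, rule_format,
        of "C * kernel_norm_sq T"]
    by (auto simp: eventually_at_bot_linorder)
  have "m \<le> Re (\<phi> w)" if "T \<le> Re w" for w
  proof (rule ccontr)
    assume "\<not> m \<le> Re (\<phi> w)"
    then have "C * kernel_norm_sq T < kernel_norm_sq (Re (\<phi> w))"
      using m by simp
    also have "\<dots> \<le> C * kernel_norm_sq (Re w)"
      by (rule C)
    also have "\<dots> \<le> C * kernel_norm_sq T"
      using that \<open>C > 0\<close> by (simp add: kernel_norm_sq_antimono)
    finally show False by simp
  qed
  then show ?thesis by (rule that)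
qed

lemma symbol_affine:
  assumes "\<phi> holomorphic_on UNIV"
  shows "\<phi> z = \<phi> 0 + deriv \<phi> 0 * z"
proof -
  obtain T where T: "\<And>w. Re w \<le> T \<Longrightarrow> Re w - 1 \<le> Re (\<phi> w)"
    using Re_symbol_ge_shift_left[of 1] by auto
  obtain m where m: "\<And>w. T \<le> Re w \<Longrightarrow> m \<le> Re (\<phi> w)"
    using Re_symbol_bounded_below[of T] by blast
  have "- cmod w - (\<bar>m\<bar> + 1) \<le> Re (\<phi> w)" for w
    using T[of w] m[of w] abs_Re_le_cmod[of w] norm_ge_zero[of w] by (cases "Re w \<le> T") auto
  then show ?thesis by (rule entire_affine_of_Re_lower_bound[OF assms])
qed

lemma affine_symbol_slope_le_one:
  assumes "\<And>z. \<phi> z = b + of_real a * z"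
  shows "a \<le> 1"
proof (rule ccontr)
  assume "\<not> a \<le> 1"
  obtain T where T: "\<And>w. Re w \<le> T \<Longrightarrow> Re w - 1 \<le> Re (\<phi> w)"
    using Re_symbol_ge_shift_left[of 1] by auto
  define x where "x = min T (- (\<bar>Re b\<bar> + 2) / (a - 1))"
  have "x \<le> - (\<bar>Re b\<bar> + 2) / (a - 1)" by (simp add: x_def)
  then have "(a - 1) * x \<le> - (\<bar>Re b\<bar> + 2)"
    using \<open>\<not> a \<le> 1\<close> by (simp add: le_divide_eq mult.commute)
  then have "Re (\<phi> (of_real x)) < x - 1"
    using assms by (simp add: algebra_simps)
  then show False using T[of "of_real x"] by (simp add: x_def)
qed

text \<open>This is the only place where \<open>\<lambda>\<^sub>1 = 0\<close> is used.\<close>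

lemma affine_symbol_slope_ge_one:
  assumes "lam 0 = 0" and "\<And>z. \<phi> z = b + of_real a * z" and "a > 0"
  shows "a \<ge> 1"
proof (rule ccontr)
  assume "\<not> a \<ge> 1"
  have "(\<lambda>z. exp (- of_real (lam 1) * z)) \<circ> \<phi>
      = (\<lambda>z. exp (- of_real (lam 1) * b) * exp (- of_real (a * lam 1) * z))"
    by (simp add: assms(2) fun_eq_iff algebra_simps flip: exp_add)
  moreover have
    "\<not> in_HE lam beta (\<lambda>z. exp (- of_real (lam 1) * b) * exp (- of_real (a * lam 1) * z))"
    using assms \<open>\<not> a \<ge> 1\<close> lam_pos[of 1] by (intro not_in_HE_exp) simp_all
  ultimately show False
    using in_HE_comp[OF in_HE_exp_frequency[of 1]] by simp
qed

lemma translation_symbol_Re_nonneg: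
  assumes "\<And>z. \<phi> z = z + b"
  shows "Re b \<ge> 0"
proof (rule ccontr)
  assume "\<not> Re b \<ge> 0"
  then obtain T where "\<And>w. Re w \<le> T \<Longrightarrow> Re w - (- Re b / 2) \<le> Re (\<phi> w)"
    using Re_symbol_ge_shift_left[of "- Re b / 2"] by auto
  from this[of "of_real T"] \<open>\<not> Re b \<ge> 0\<close> show False by (simp add: assms)
qed

lemma composition_symbol_cases:
  assumes "lam 0 = 0" and "\<phi> holomorphic_on UNIV"
  shows "(\<exists>c. \<forall>z. \<phi> z = c) \<or> (\<exists>b. Re b \<ge> 0 \<and> (\<forall>z. \<phi> z = z + b))"
proof -
  define b \<alpha> where "b = \<phi> 0" and "\<alpha> = deriv \<phi> 0"
  have affine: "\<phi> z = b + \<alpha> * z" for z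
    unfolding b_def \<alpha>_def by (rule symbol_affine[OF assms(2)])
  obtain m where m: "\<And>w. 0 \<le> Re w \<Longrightarrow> m \<le> Re (\<phi> w)"
    using Re_symbol_bounded_below[of 0] by blast
  have bounded_below: "m \<le> Re (b + \<alpha> * w)" if "0 \<le> Re w" for w
    using m[OF that] by (simp add: affine)
  note \<alpha>_nonneg_real = affine_Re_bounded_below_on_right_half_plane[OF bounded_below]
  define a where "a = Re \<alpha>"
  have real_affine: "\<phi> z = b + of_real a * z" for z
    using \<alpha>_nonneg_real(1) by (simp add: affine a_def complex_eq_iff)
  show ?thesis
  proof (cases "a = 0")
    case True
    then show ?thesis using real_affine by auto
  next
    case False
    then have "a = 1"
      using affine_symbol_slope_le_one[OF real_affine]
        affine_symbol_slope_ge_one[OF assms(1) real_affine] \<alpha>_nonneg_real(2)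
      by (simp add: a_def)
    then have "\<phi> z = z + b" for z
      using real_affine by (simp add: add.commute)
    then show ?thesis
      using translation_symbol_Re_nonneg by blast
  qed
qed

end

end

theorem proposition4p6:
  fixes lam beta :: "nat \<Rightarrow> real" and \<phi> :: "complex \<Rightarrow> complex"
  assumes "frequency_seq lam" and "lam 0 = 0"
    and "condition_E lam beta"
    and "\<phi> holomorphic_on UNIV"
    and "bounded_composition lam beta \<phi>"
  shows "(\<exists>c. \<forall>z. \<phi> z = c) \<noteq> (\<exists>b. Re b \<ge> 0 \<and> (\<forall>z. \<phi> z = z + b))"
proof -
  interpret dirichlet_HE lam beta
    using assms(1,3) by unfold_locales
  have "\<not> ((\<exists>c. \<forall>z. \<phi> z = c) \<and> (\<exists>b. \<forall>z. \<phi> z = z + b))"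
  proof
    assume "(\<exists>c. \<forall>z. \<phi> z = c) \<and> (\<exists>b. \<forall>z. \<phi> z = z + b)"
    then obtain c b where "\<forall>z. \<phi> z = c" and "\<forall>z. \<phi> z = z + b" by blast
    then have "0 + b = 1 + b" by metis
    then show False by simp
  qed
  then show ?thesis
    using composition_symbol_cases[OF assms(5,2,4)] by blast
qed

end
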